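(* Let $A\in\mathbb{R}^{m\times n}$ with $A\geq 0$ and $A^{\dagger}\geq 0$, and let $(U_k^{(i)},V_k^{(i)},E_k)_{k=1}^{p}$, $i=1,2$, be two proper weak regular multisplittings of $A$ (with the same weighting matrices $E_k$) such that $R(E_k)\subseteq R(A^{T})$ for each $k=1,\ldots,p$. If $V_k^{(2)}\geq V_k^{(1)}$ for each $k=1,\ldots,p$, then $\rho(H_1)\leq\rho(H_2)<1$, where $H_i=\sum_{k=1}^{p}E_k[U_k^{(i)}]^{\dagger}V_k^{(i)}$ for $i=1,2$.
   Context: $A^{\dagger}$ denotes the Moore–Penrose inverse, $\rho(\cdot)$ the spectral radius, $R(\cdot)$, $N(\cdot)$ range and null space; inequalities are entrywise. A splitting $A=U-V$ is proper if $R(U)=R(A)$ and $N(U)=N(A)$; a proper splitting is proper weak regular if $U^{\dagger}\geq 0$ and $U^{\dagger}V\geq 0$. A proper weak regular multisplitting of $A$ is a triplet $(U_k,V_k,E_k)_{k=1}^{p}$ where each $A=U_k-V_k$ is a proper weak regular splitting and each $E_k\geq 0$ is an $n\times n$ diagonal matrix with $\sum_{k=1}^{p}E_k=I_n$. *)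

theory Defs
  imports "Jordan_Normal_Form.Spectral_Radius"
begin

text \<open>Matrices are Jordan_Normal_Form matrices ('a mat) with explicit carrier dimensions.
  The order on matrices from that library is entrywise (and requires equal dimensions).\<close>

definition penrose_conds :: "real mat \<Rightarrow> real mat \<Rightarrow> bool" where
  "penrose_conds A X \<longleftrightarrow>
     X \<in> carrier_mat (dim_col A) (dim_row A) \<and>
     A * X * A = A \<and> X * A * X = X \<and>
     transpose_mat (A * X) = A * X \<and> transpose_mat (X * A) = X * A"

definition mp_inverse :: "real mat \<Rightarrow> real mat" where
  "mp_inverse A = (THE X. penrose_conds A X)"

definition range_mat :: "real mat \<Rightarrow> real vec set" where
  "range_mat A = {A *\<^sub>v x | x. x \<in> carrier_vec (dim_col A)}"

definition null_mat :: "real mat \<Rightarrow> real vec set" where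
  "null_mat A = {x \<in> carrier_vec (dim_col A). A *\<^sub>v x = 0\<^sub>v (dim_row A)}"

definition spec_rad :: "real mat \<Rightarrow> real" where
  "spec_rad A = spectral_radius (map_mat complex_of_real A)"

definition proper_splitting :: "real mat \<Rightarrow> real mat \<Rightarrow> real mat \<Rightarrow> bool" where
  "proper_splitting A U V \<longleftrightarrow>
     U \<in> carrier_mat (dim_row A) (dim_col A) \<and> V \<in> carrier_mat (dim_row A) (dim_col A) \<and>
     A = U - V \<and> range_mat U = range_mat A \<and> null_mat U = null_mat A"

definition proper_weak_regular_splitting :: "real mat \<Rightarrow> real mat \<Rightarrow> real mat \<Rightarrow> bool" where
  "proper_weak_regular_splitting A U V \<longleftrightarrow>
     proper_splitting A U V \<and>
     0\<^sub>m (dim_col A) (dim_row A) \<le> mp_inverse U \<and>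
     0\<^sub>m (dim_col A) (dim_col A) \<le> mp_inverse U * V"

fun mat_sum :: "nat \<Rightarrow> nat \<Rightarrow> (nat \<Rightarrow> real mat) \<Rightarrow> nat \<Rightarrow> real mat" where
  "mat_sum nr nc f 0 = 0\<^sub>m nr nc"
| "mat_sum nr nc f (Suc k) = mat_sum nr nc f k + f k"

text \<open>Proper weak regular multisplitting (U_k, V_k, E_k), k = 0..p-1 (0-based indexing).\<close>
definition proper_weak_regular_multisplitting ::
  "real mat \<Rightarrow> nat \<Rightarrow> (nat \<Rightarrow> real mat) \<Rightarrow> (nat \<Rightarrow> real mat) \<Rightarrow> (nat \<Rightarrow> real mat) \<Rightarrow> bool" where
  "proper_weak_regular_multisplitting A p U V E \<longleftrightarrow>
     (\<forall>k<p. proper_weak_regular_splitting A (U k) (V k) \<and>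
            E k \<in> carrier_mat (dim_col A) (dim_col A) \<and> diagonal_mat (E k) \<and>
            0\<^sub>m (dim_col A) (dim_col A) \<le> E k) \<and>
     mat_sum (dim_col A) (dim_col A) E p = 1\<^sub>m (dim_col A)"

definition iter_mat :: "real mat \<Rightarrow> nat \<Rightarrow> (nat \<Rightarrow> real mat) \<Rightarrow> (nat \<Rightarrow> real mat) \<Rightarrow> (nat \<Rightarrow> real mat) \<Rightarrow> real mat" where
  "iter_mat A p U V E = mat_sum (dim_col A) (dim_col A) (\<lambda>k. E k * mp_inverse (U k) * V k) p"

end

theory Submission
  imports Defs
begin

text \<open>Since the ranges of the weights \<open>E\<^sub>k\<close> lie in \<open>R(A\<^sup>T)\<close> and the \<open>E\<^sub>k\<close> sum to \<open>I\<close>, the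
  null space of \<open>A\<close> is trivial; hence \<open>A\<^sup>\<dagger>\<close> is a left inverse of \<open>A\<close>, and likewise \<open>U\<^sup>\<dagger>\<close> of \<open>U\<close>
  for every proper splitting \<open>A = U - V\<close>. For a proper weak regular splitting the matrix
  \<open>U\<^sup>\<dagger>A = I - U\<^sup>\<dagger>V\<close> is nonnegative while \<open>U\<^sup>\<dagger>V\<close> is nonnegative too, which forces \<open>U\<^sup>\<dagger>V\<close> to be
  diagonal. As \<open>A A\<^sup>\<dagger> U = U\<close>, we get \<open>(I - U\<^sup>\<dagger>V)(I + A\<^sup>\<dagger>V) = U\<^sup>\<dagger>U = I\<close>, so the diagonal entries
  of \<open>U\<^sup>\<dagger>V\<close> are \<open>1 - 1/(1 + (A\<^sup>\<dagger>V)\<^sub>i\<^sub>i)\<close>: they lie in \<open>[0,1)\<close> and grow with \<open>V\<close> because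
  \<open>A\<^sup>\<dagger> \<ge> 0\<close>. Thus each \<open>H\<^sub>i\<close> is diagonal with convex combinations of these numbers on the
  diagonal, and the spectral radius of a diagonal matrix is its largest absolute diagonal
  entry.\<close>

lemma mat_sum_carrier:
  "(\<And>k. k < p \<Longrightarrow> f k \<in> carrier_mat nr nc) \<Longrightarrow> mat_sum nr nc f p \<in> carrier_mat nr nc"
  by (induction p) auto

lemma mat_sum_cong:
  "(\<And>k. k < p \<Longrightarrow> f k = g k) \<Longrightarrow> mat_sum nr nc f p = mat_sum nr nc g p"
  by (induction p) auto

lemma index_mat_sum:
  assumes "\<And>k. k < p \<Longrightarrow> f k \<in> carrier_mat nr nc" "i < nr" "j < nc"
  shows "mat_sum nr nc f p $$ (i,j) = (\<Sum>k<p. f k $$ (i,j))"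
  using assms(1)
proof (induction p)
  case (Suc p)
  have "mat_sum nr nc f p \<in> carrier_mat nr nc" "f p \<in> carrier_mat nr nc"
    using Suc.prems by (auto intro: mat_sum_carrier)
  then have "mat_sum nr nc f (Suc p) $$ (i,j) = mat_sum nr nc f p $$ (i,j) + f p $$ (i,j)"
    using assms(2,3) by simp
  then show ?case using Suc by simp
qed (use assms(2,3) in simp)

lemma scalar_prod_mat_sum:
  fixes x y :: "real vec"
  assumes x: "x \<in> carrier_vec nc" and y: "y \<in> carrier_vec nr"
    and f: "\<And>k. k < p \<Longrightarrow> f k \<in> carrier_mat nr nc"
  shows "y \<bullet> (mat_sum nr nc f p *\<^sub>v x) = (\<Sum>k<p. y \<bullet> (f k *\<^sub>v x))"
  using f
proof (induction p)
  case 0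
  have "0\<^sub>m nr nc *\<^sub>v x = 0\<^sub>v nr" using x by (intro eq_vecI) auto
  then show ?case using y by simp
next
  case (Suc p)
  have S: "mat_sum nr nc f p \<in> carrier_mat nr nc" and F: "f p \<in> carrier_mat nr nc"
    using Suc.prems by (auto intro: mat_sum_carrier)
  have "y \<bullet> (mat_sum nr nc f (Suc p) *\<^sub>v x)
      = y \<bullet> (mat_sum nr nc f p *\<^sub>v x) + y \<bullet> (f p *\<^sub>v x)"
    using S F x y by (simp add: add_mult_distrib_mat_vec scalar_prod_add_distrib[of _ nr])
  then show ?case using Suc by simp
qed

lemma index_mult_mat_sum:
  fixes A B :: "'a :: semiring_0 mat"
  assumes "A \<in> carrier_mat a b" "B \<in> carrier_mat b c" "i < a" "j < c"
  shows "(A * B) $$ (i,j) = (\<Sum>k<b. A $$ (i,k) * B $$ (k,j))"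
  using assms by (auto simp: scalar_prod_def atLeast0LessThan intro!: sum.cong)

lemma eq_mat_on_vecI:
  fixes M1 M2 :: "'a :: semiring_1 mat"
  assumes M: "M1 \<in> carrier_mat nr nc" "M2 \<in> carrier_mat nr nc"
    and eq: "\<And>v. v \<in> carrier_vec nc \<Longrightarrow> M1 *\<^sub>v v = M2 *\<^sub>v v"
  shows "M1 = M2"
proof (rule eq_matI)
  fix i j assume ij: "i < dim_row M2" "j < dim_col M2"
  have "M1 $$ (i,j) = (M1 *\<^sub>v unit_vec nc j) $ i"
    using M ij by (simp add: scalar_prod_right_unit[of j nc "row M1 i"])
  also have "\<dots> = (M2 *\<^sub>v unit_vec nc j) $ i" using eq by simp
  also have "\<dots> = M2 $$ (i,j)"
    using M ij by (simp add: scalar_prod_right_unit[of j nc "row M2 i"])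
  finally show "M1 $$ (i,j) = M2 $$ (i,j)" .
qed (use M in auto)

lemma less_eq_matD:
  "A \<le> B \<Longrightarrow> i < dim_row B \<Longrightarrow> j < dim_col B \<Longrightarrow> A $$ (i,j) \<le> B $$ (i,j)"
  unfolding less_eq_mat_def by auto

lemma mult_mat_left_mono:
  fixes L V1 V2 :: "'a :: ordered_semiring_0 mat"
  assumes L: "L \<in> carrier_mat n m" and V: "V1 \<in> carrier_mat m k" "V2 \<in> carrier_mat m k"
    and "0\<^sub>m n m \<le> L" and "V1 \<le> V2"
  shows "L * V1 \<le> L * V2"
proof -
  have "(L * V1) $$ (i,j) \<le> (L * V2) $$ (i,j)" if "i < n" "j < k" for i j
    unfolding index_mult_mat_sum[OF L V(1) that] index_mult_mat_sum[OF L V(2) that]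
    using assms that by (intro sum_mono mult_left_mono) (auto simp: less_eq_mat_def)
  then show ?thesis using L V by (auto simp: less_eq_mat_def)
qed

lemma mult_mat_nonneg:
  fixes A B :: "'a :: ordered_semiring_0 mat"
  assumes A: "A \<in> carrier_mat n m" and B: "B \<in> carrier_mat m k"
    and "0\<^sub>m n m \<le> A" "0\<^sub>m m k \<le> B"
  shows "0\<^sub>m n k \<le> A * B"
  using mult_mat_left_mono[OF A zero_carrier_mat B] assms by simp

lemma scalar_prod_self_eq_0_iff:
  fixes v :: "real vec"
  shows "v \<in> carrier_vec n \<Longrightarrow> v \<bullet> v = 0 \<longleftrightarrow> v = 0\<^sub>v n"
  using conjugate_square_eq_0_vec[of v n] by (simp add: scalar_prod_def conjugate_vec_def)

subsection \<open>Moore--Penrose inverse of a matrix with trivial null space\<close>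

lemma det_transpose_mult_self_nonzero:
  fixes M :: "real mat"
  assumes M: "M \<in> carrier_mat m n" and inj: "null_mat M = {0\<^sub>v n}"
  shows "det (transpose_mat M * M) \<noteq> 0"
proof
  assume "det (transpose_mat M * M) = 0"
  then obtain v where v: "v \<in> carrier_vec n" "v \<noteq> 0\<^sub>v n" "(transpose_mat M * M) *\<^sub>v v = 0\<^sub>v n"
    using det_0_iff_vec_prod_zero[of "transpose_mat M * M" n] M by auto
  have "(M *\<^sub>v v) \<bullet> (M *\<^sub>v v) = (transpose_mat M *\<^sub>v (M *\<^sub>v v)) \<bullet> v"
    using transpose_vec_mult_scalar[OF M v(1), of "M *\<^sub>v v"] M v by simp
  also have "\<dots> = 0" using M v by simp
  finally have "M *\<^sub>v v = 0\<^sub>v m" using M v scalar_prod_self_eq_0_iff[of "M *\<^sub>v v" m] by simp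
  then have "v \<in> null_mat M" using M v unfolding null_mat_def by simp
  then show False using inj v by simp
qed

lemma transpose_right_inverse_of_symmetric:
  fixes S T :: "'a :: comm_ring_1 mat"
  assumes S: "S \<in> carrier_mat n n" and T: "T \<in> carrier_mat n n"
    and sym: "transpose_mat S = S" and ST: "S * T = 1\<^sub>m n"
  shows "transpose_mat T = T"
proof -
  have "transpose_mat T * S = transpose_mat (S * T)"
    using transpose_mult[OF S T] sym by simp
  then have TtS: "transpose_mat T * S = 1\<^sub>m n" using ST by simp
  have "transpose_mat T = transpose_mat T * (S * T)" using T ST by simp
  also have "\<dots> = (transpose_mat T * S) * T" using S T by simp
  finally show ?thesis using T TtS by simp
qed

lemma penrose_conds_transpose_eq:
  assumes "penrose_conds M Y"
  shows "transpose_mat M = (transpose_mat M * M) * Y"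
proof -
  have M: "M \<in> carrier_mat (dim_row M) (dim_col M)" by simp
  have Y: "Y \<in> carrier_mat (dim_col M) (dim_row M)" and MYM: "M * Y * M = M"
    and sym: "transpose_mat (M * Y) = M * Y"
    using assms unfolding penrose_conds_def by auto
  have MY: "M * Y \<in> carrier_mat (dim_row M) (dim_row M)" using mult_carrier_mat[OF M Y] .
  have Mt: "transpose_mat M \<in> carrier_mat (dim_col M) (dim_row M)" by simp
  have "transpose_mat M = transpose_mat (M * Y * M)" unfolding MYM ..
  also have "\<dots> = transpose_mat M * transpose_mat (M * Y)" by (rule transpose_mult[OF MY M])
  also have "\<dots> = transpose_mat M * (M * Y)" unfolding sym ..
  also have "\<dots> = (transpose_mat M * M) * Y" by (rule assoc_mult_mat[OF Mt M Y, symmetric])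
  finally show ?thesis .
qed

text \<open>With trivial null space, \<open>M\<^sup>\<dagger> = (M\<^sup>T M)\<^sup>-\<^sup>1 M\<^sup>T\<close>.\<close>

lemma mp_inverse_left_inverse:
  fixes M :: "real mat"
  assumes M: "M \<in> carrier_mat m n" and inj: "null_mat M = {0\<^sub>v n}"
  shows "mp_inverse M \<in> carrier_mat n m" "mp_inverse M * M = 1\<^sub>m n"
proof -
  let ?S = "transpose_mat M * M"
  have S: "?S \<in> carrier_mat n n" using M by simp
  obtain T where T: "T \<in> carrier_mat n n" "T * ?S = 1\<^sub>m n" "?S * T = 1\<^sub>m n"
    using det_non_zero_imp_unit[OF S det_transpose_mult_self_nonzero[OF M inj], of undefined]
    unfolding Units_def ring_mat_def by auto
  have Mt: "transpose_mat M \<in> carrier_mat n m" using M by simp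
  have "transpose_mat ?S = ?S" using transpose_mult[OF Mt M] by simp
  then have Tsym: "transpose_mat T = T" by (rule transpose_right_inverse_of_symmetric[OF S T(1) _ T(3)])
  define X where "X = T * transpose_mat M"
  have X: "X \<in> carrier_mat n m" using T M unfolding X_def by simp
  have XM: "X * M = 1\<^sub>m n" using T M unfolding X_def by (simp add: assoc_mult_mat[of _ n n _ m _ n])
  have "penrose_conds M X"
    unfolding penrose_conds_def
  proof (intro conjI)
    show "X \<in> carrier_mat (dim_col M) (dim_row M)" using X M by simp
    show "M * X * M = M" using M X XM by (simp add: assoc_mult_mat[of M m n X m M n])
    show "X * M * X = X" using X XM by simp
    show "transpose_mat (X * M) = X * M" using XM by simp
    show "transpose_mat (M * X) = M * X"
      using transpose_mult[OF M X] transpose_mult[OF T(1) Mt] M T Tsym unfolding X_def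
      by (simp add: assoc_mult_mat[of _ m n _ n _ m])
  qed
  moreover have "Y = X" if "penrose_conds M Y" for Y
  proof -
    have Y: "Y \<in> carrier_mat n m" using that M unfolding penrose_conds_def by auto
    have "X = T * (?S * Y)" unfolding X_def using penrose_conds_transpose_eq[OF that] by (rule arg_cong)
    also have "\<dots> = (T * ?S) * Y" by (rule assoc_mult_mat[symmetric, OF T(1) S Y])
    finally show ?thesis using T Y by simp
  qed
  ultimately have "mp_inverse M = X" unfolding mp_inverse_def by (rule the_equality)
  then show "mp_inverse M \<in> carrier_mat n m" "mp_inverse M * M = 1\<^sub>m n" using X XM by simp_all
qed

lemma null_mat_orthogonal_range_transpose:
  fixes A :: "real mat"
  assumes A: "A \<in> carrier_mat m n" and x: "x \<in> null_mat A"
    and z: "z \<in> range_mat (transpose_mat A)"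
  shows "x \<bullet> z = 0"
proof -
  have xc: "x \<in> carrier_vec n" and Ax: "A *\<^sub>v x = 0\<^sub>v m" using x A unfolding null_mat_def by auto
  obtain y where y: "y \<in> carrier_vec m" "z = transpose_mat A *\<^sub>v y"
    using z A unfolding range_mat_def by auto
  have "x \<bullet> z = (transpose_mat A *\<^sub>v y) \<bullet> x" using y xc A by (simp add: comm_scalar_prod[of _ n])
  also have "\<dots> = y \<bullet> (A *\<^sub>v x)" by (rule transpose_vec_mult_scalar[OF A xc y(1)])
  finally show ?thesis using Ax y(1) by simp
qed

lemma null_mat_eq_zero_if_weights_in_row_space:
  fixes A :: "real mat"
  assumes A: "A \<in> carrier_mat m n"
    and E: "\<And>k. k < p \<Longrightarrow> E k \<in> carrier_mat n n" and E_sum: "mat_sum n n E p = 1\<^sub>m n"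
    and E_range: "\<And>k. k < p \<Longrightarrow> range_mat (E k) \<subseteq> range_mat (transpose_mat A)"
  shows "null_mat A = {0\<^sub>v n}"
proof -
  have "x = 0\<^sub>v n" if x: "x \<in> null_mat A" for x
  proof -
    have xc: "x \<in> carrier_vec n" using x unfolding null_mat_def using A by auto
    have "x \<bullet> (E k *\<^sub>v x) = 0" if k: "k < p" for k
    proof (rule null_mat_orthogonal_range_transpose[OF A x])
      show "E k *\<^sub>v x \<in> range_mat (transpose_mat A)"
        using E_range[OF k] E[OF k] xc unfolding range_mat_def by auto
    qed
    moreover have "x \<bullet> (mat_sum n n E p *\<^sub>v x) = (\<Sum>k<p. x \<bullet> (E k *\<^sub>v x))"
      by (rule scalar_prod_mat_sum[OF xc xc E])
    ultimately have "x \<bullet> x = 0" using E_sum xc by simp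
    then show ?thesis using xc by (simp add: scalar_prod_self_eq_0_iff)
  qed
  then show ?thesis using A unfolding null_mat_def by auto
qed

subsection \<open>Diagonal matrices\<close>

lemma diagonal_mat_mult_index:
  fixes D B :: "'a :: semiring_0 mat"
  assumes D: "D \<in> carrier_mat n n" "diagonal_mat D" and B: "B \<in> carrier_mat n k"
    and ij: "i < n" "j < k"
  shows "(D * B) $$ (i,j) = D $$ (i,i) * B $$ (i,j)"
proof -
  have "(D * B) $$ (i,j) = (\<Sum>c<n. if c = i then D $$ (i,i) * B $$ (i,j) else 0)"
    unfolding index_mult_mat_sum[OF D(1) B ij]
    using D ij by (intro sum.cong) (auto simp: diagonal_mat_def)
  then show ?thesis using ij by simp
qed

lemma mat_sum_diagonal_mult:
  fixes E G :: "nat \<Rightarrow> real mat"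
  assumes E: "\<And>k. k < p \<Longrightarrow> E k \<in> carrier_mat n n" "\<And>k. k < p \<Longrightarrow> diagonal_mat (E k)"
    and G: "\<And>k. k < p \<Longrightarrow> G k \<in> carrier_mat n n" "\<And>k. k < p \<Longrightarrow> diagonal_mat (G k)"
  shows "mat_sum n n (\<lambda>k. E k * G k) p \<in> carrier_mat n n"
    and "diagonal_mat (mat_sum n n (\<lambda>k. E k * G k) p)"
    and "\<And>i. i < n \<Longrightarrow> mat_sum n n (\<lambda>k. E k * G k) p $$ (i,i) = (\<Sum>k<p. E k $$ (i,i) * G k $$ (i,i))"
proof -
  have EG: "E k * G k \<in> carrier_mat n n" if "k < p" for k
    by (rule mult_carrier_mat[OF E(1)[OF that] G(1)[OF that]])
  have entry: "mat_sum n n (\<lambda>k. E k * G k) p $$ (i,j) = (\<Sum>k<p. E k $$ (i,i) * G k $$ (i,j))"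
    if ij: "i < n" "j < n" for i j
  proof -
    have "(E k * G k) $$ (i,j) = E k $$ (i,i) * G k $$ (i,j)" if "k < p" for k
      using diagonal_mat_mult_index[OF E(1)[OF that] E(2)[OF that] G(1)[OF that] ij] .
    then show ?thesis using index_mat_sum[of p "\<lambda>k. E k * G k", OF EG ij] by simp
  qed
  show "mat_sum n n (\<lambda>k. E k * G k) p \<in> carrier_mat n n" by (rule mat_sum_carrier[OF EG])
  moreover have "(\<Sum>k<p. E k $$ (i,i) * G k $$ (i,j)) = 0" if ij: "i < n" "j < n" "i \<noteq> j" for i j
  proof -
    have "G k $$ (i,j) = 0" if "k < p" for k
      using G(1)[OF that] G(2)[OF that] ij unfolding diagonal_mat_def by auto
    then show ?thesis by simp
  qed
  ultimately show "diagonal_mat (mat_sum n n (\<lambda>k. E k * G k) p)"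
    by (auto simp: diagonal_mat_def entry)
  show "\<And>i. i < n \<Longrightarrow> mat_sum n n (\<lambda>k. E k * G k) p $$ (i,i) = (\<Sum>k<p. E k $$ (i,i) * G k $$ (i,i))"
    by (rule entry)
qed

lemma spec_rad_diagonal_mat:
  assumes H: "H \<in> carrier_mat n n" "diagonal_mat H" and n: "0 < n"
  shows "spec_rad H = Max ((\<lambda>i. \<bar>H $$ (i,i)\<bar>) ` {..<n})"
proof -
  define C where "C = map_mat complex_of_real H"
  have C: "C \<in> carrier_mat n n" using H unfolding C_def by simp
  have ut: "upper_triangular C" using H unfolding C_def upper_triangular_def diagonal_mat_def by auto
  have "spectrum C = set (diag_mat C)"
    unfolding spectrum_root_char_poly[OF C] char_poly_upper_triangular[OF C ut] poly_prod_list
    by auto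
  also have "\<dots> = (\<lambda>i. complex_of_real (H $$ (i,i))) ` {..<n}"
    using H unfolding diag_mat_def C_def lessThan_atLeast0 by auto
  finally have norms: "norm ` spectrum C = (\<lambda>i. \<bar>H $$ (i,i)\<bar>) ` {..<n}"
    by (simp add: image_image)
  have mem: "spectral_radius C \<in> (\<lambda>i. \<bar>H $$ (i,i)\<bar>) ` {..<n}"
    using spectral_radius_mem_max(1)[OF C n] unfolding norms .
  have le: "a \<le> spectral_radius C" if "a \<in> (\<lambda>i. \<bar>H $$ (i,i)\<bar>) ` {..<n}" for a
    using spectral_radius_mem_max(2)[OF C n] that unfolding norms .
  have "Max ((\<lambda>i. \<bar>H $$ (i,i)\<bar>) ` {..<n}) = spectral_radius C"
    by (rule Max_eqI) (simp_all add: mem le)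
  then show ?thesis unfolding spec_rad_def C_def by simp
qed

lemma spec_rad_diagonal_mat_mono:
  assumes "H1 \<in> carrier_mat n n" "diagonal_mat H1" "H2 \<in> carrier_mat n n" "diagonal_mat H2"
    and "0 < n" and "\<And>i. i < n \<Longrightarrow> \<bar>H1 $$ (i,i)\<bar> \<le> \<bar>H2 $$ (i,i)\<bar>"
  shows "spec_rad H1 \<le> spec_rad H2"
proof -
  have "\<bar>H1 $$ (i,i)\<bar> \<le> Max ((\<lambda>i. \<bar>H2 $$ (i,i)\<bar>) ` {..<n})" if "i < n" for i
    by (rule order_trans[OF assms(6)[OF that] Max_ge]) (use that in auto)
  then show ?thesis
    unfolding spec_rad_diagonal_mat[OF assms(1,2,5)] spec_rad_diagonal_mat[OF assms(3,4,5)]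
    using assms(5) by (subst Max_le_iff) auto
qed

lemma spec_rad_diagonal_mat_less:
  assumes "H \<in> carrier_mat n n" "diagonal_mat H" "0 < n" and "\<And>i. i < n \<Longrightarrow> \<bar>H $$ (i,i)\<bar> < c"
  shows "spec_rad H < c"
proof -
  have "finite ((\<lambda>i. \<bar>H $$ (i,i)\<bar>) ` {..<n})" "(\<lambda>i. \<bar>H $$ (i,i)\<bar>) ` {..<n} \<noteq> {}"
    using assms(3) by auto
  then show ?thesis
    unfolding spec_rad_diagonal_mat[OF assms(1-3)] using assms(4) by simp
qed

lemma nonneg_complement_imp_diagonal_mat:
  fixes G :: "real mat"
  assumes G: "G \<in> carrier_mat n n" and "0\<^sub>m n n \<le> G" "0\<^sub>m n n \<le> 1\<^sub>m n - G"
  shows "diagonal_mat G"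
proof -
  have "G $$ (i,j) = 0" if ij: "i < n" "j < n" "i \<noteq> j" for i j
  proof -
    have "0 \<le> G $$ (i,j)" using less_eq_matD[OF assms(2), of i j] G ij by simp
    moreover have "0 \<le> (1\<^sub>m n - G) $$ (i,j)" using less_eq_matD[OF assms(3), of i j] G ij by simp
    ultimately show ?thesis using G ij by simp
  qed
  then show ?thesis using G unfolding diagonal_mat_def by simp
qed

lemma diagonal_complement_inverse_index:
  fixes G F :: "real mat"
  assumes G: "G \<in> carrier_mat n n" "diagonal_mat G" and F: "F \<in> carrier_mat n n"
    and nonneg: "0\<^sub>m n n \<le> 1\<^sub>m n - G" and inv: "(1\<^sub>m n - G) * (1\<^sub>m n + F) = 1\<^sub>m n"
    and i: "i < n"
  shows "0 < 1 + F $$ (i,i)" and "G $$ (i,i) = 1 - 1 / (1 + F $$ (i,i))"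
proof -
  have "1\<^sub>m n - G \<in> carrier_mat n n" "diagonal_mat (1\<^sub>m n - G)"
    using G unfolding diagonal_mat_def by auto
  then have prod: "(1 - G $$ (i,i)) * (1 + F $$ (i,i)) = 1"
    using diagonal_mat_mult_index[of "1\<^sub>m n - G" n "1\<^sub>m n + F" n i i] inv G F i by simp
  moreover have "0 \<le> 1 - G $$ (i,i)" using less_eq_matD[OF nonneg, of i i] G i by simp
  ultimately show pos: "0 < 1 + F $$ (i,i)"
    using zero_less_mult_iff[of "1 - G $$ (i,i)" "1 + F $$ (i,i)"] by auto
  show "G $$ (i,i) = 1 - 1 / (1 + F $$ (i,i))" using prod pos by (simp add: field_simps)
qed

subsection \<open>Proper weak regular splittings\<close>

lemma g_inverse_mult_range:
  fixes A L U :: "real mat"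
  assumes A: "A \<in> carrier_mat m n" and L: "L \<in> carrier_mat n m" and U: "U \<in> carrier_mat m k"
    and ALA: "A * L * A = A" and range: "range_mat U \<subseteq> range_mat A"
  shows "A * L * U = U"
proof (rule eq_mat_on_vecI[of _ m k])
  fix v :: "real vec" assume v: "v \<in> carrier_vec k"
  have "U *\<^sub>v v \<in> range_mat U" using v U unfolding range_mat_def by auto
  then have "U *\<^sub>v v \<in> range_mat A" using range by blast
  then obtain w where w: "w \<in> carrier_vec n" "U *\<^sub>v v = A *\<^sub>v w"
    using A unfolding range_mat_def by auto
  have AL: "A * L \<in> carrier_mat m m" using A L by simp
  have "(A * L * U) *\<^sub>v v = (A * L) *\<^sub>v (A *\<^sub>v w)"
    unfolding w(2)[symmetric] by (rule assoc_mult_mat_vec[OF AL U v])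
  also have "\<dots> = (A * L * A) *\<^sub>v w" by (rule assoc_mult_mat_vec[OF AL A w(1), symmetric])
  finally show "(A * L * U) *\<^sub>v v = U *\<^sub>v v" unfolding ALA w(2) .
qed (use A L U in simp_all)

lemma proper_weak_regular_splitting_complement:
  fixes A U V :: "real mat"
  assumes A: "A \<in> carrier_mat m n" and A_nonneg: "0\<^sub>m m n \<le> A" and A_inj: "null_mat A = {0\<^sub>v n}"
    and S: "proper_weak_regular_splitting A U V"
  shows "mp_inverse U \<in> carrier_mat n m" and "mp_inverse U * V \<in> carrier_mat n n"
    and "0\<^sub>m n n \<le> 1\<^sub>m n - mp_inverse U * V"
    and "(1\<^sub>m n - mp_inverse U * V) * (1\<^sub>m n + mp_inverse A * V) = 1\<^sub>m n"
proof -
  define P where "P = mp_inverse U"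
  define L where "L = mp_inverse A"
  have U: "U \<in> carrier_mat m n" and V: "V \<in> carrier_mat m n" and AUV: "A = U - V"
    and range: "range_mat U = range_mat A" and null: "null_mat U = null_mat A"
    and P_nonneg: "0\<^sub>m n m \<le> P"
    using S A unfolding proper_weak_regular_splitting_def proper_splitting_def P_def by auto
  have P: "P \<in> carrier_mat n m" and PU: "P * U = 1\<^sub>m n"
    using mp_inverse_left_inverse[OF U] null A_inj unfolding P_def by auto
  have L: "L \<in> carrier_mat n m" and LA: "L * A = 1\<^sub>m n"
    using mp_inverse_left_inverse[OF A A_inj] unfolding L_def by auto
  have ALA: "A * L * A = A" using A L LA by (simp add: assoc_mult_mat[of A m n L m A n])
  have PA: "P * A = 1\<^sub>m n - P * V"
    using P U V PU unfolding AUV by (simp add: mult_minus_distrib_mat)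
  have LU: "L * U = 1\<^sub>m n + L * V"
  proof -
    have "U = A + V" using U V unfolding AUV by auto
    then show ?thesis using A L V LA by (simp add: mult_add_distrib_mat)
  qed
  show "mp_inverse U \<in> carrier_mat n m" "mp_inverse U * V \<in> carrier_mat n n"
    using P V unfolding P_def by simp_all
  show "0\<^sub>m n n \<le> 1\<^sub>m n - mp_inverse U * V"
    using mult_mat_nonneg[OF P A P_nonneg A_nonneg] PA unfolding P_def by simp
  have ALU: "A * (L * U) = U"
    using g_inverse_mult_range[OF A L U ALA] range assoc_mult_mat[OF A L U] by simp
  have "(P * A) * (L * U) = P * (A * (L * U))" by (rule assoc_mult_mat[OF P A mult_carrier_mat[OF L U]])
  also have "\<dots> = 1\<^sub>m n" using ALU PU by simp
  finally have "(1\<^sub>m n - P * V) * (1\<^sub>m n + L * V) = 1\<^sub>m n" unfolding PA LU .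
  then show "(1\<^sub>m n - mp_inverse U * V) * (1\<^sub>m n + mp_inverse A * V) = 1\<^sub>m n"
    unfolding P_def L_def .
qed

lemma proper_weak_regular_splitting_diagonal:
  fixes A U V :: "real mat"
  assumes A: "A \<in> carrier_mat m n" "0\<^sub>m m n \<le> A" "null_mat A = {0\<^sub>v n}"
    and S: "proper_weak_regular_splitting A U V"
  shows "diagonal_mat (mp_inverse U * V)"
  using nonneg_complement_imp_diagonal_mat proper_weak_regular_splitting_complement[OF A S] S A(1)
  unfolding proper_weak_regular_splitting_def by auto

lemma proper_weak_regular_splitting_index:
  fixes A U V :: "real mat"
  assumes A: "A \<in> carrier_mat m n" "0\<^sub>m m n \<le> A" "null_mat A = {0\<^sub>v n}"
    and S: "proper_weak_regular_splitting A U V" and i: "i < n"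
  shows "0 < 1 + (mp_inverse A * V) $$ (i,i)"
    and "(mp_inverse U * V) $$ (i,i) = 1 - 1 / (1 + (mp_inverse A * V) $$ (i,i))"
proof -
  have "mp_inverse A * V \<in> carrier_mat n n"
    using mp_inverse_left_inverse[OF A(1,3)] S A(1)
    unfolding proper_weak_regular_splitting_def proper_splitting_def by auto
  then show "0 < 1 + (mp_inverse A * V) $$ (i,i)"
    and "(mp_inverse U * V) $$ (i,i) = 1 - 1 / (1 + (mp_inverse A * V) $$ (i,i))"
    using diagonal_complement_inverse_index proper_weak_regular_splitting_complement[OF A S]
      proper_weak_regular_splitting_diagonal[OF A S] i by blast+
qed

lemma proper_weak_regular_splitting_index_bounds:
  fixes A U V :: "real mat"
  assumes A: "A \<in> carrier_mat m n" "0\<^sub>m m n \<le> A" "null_mat A = {0\<^sub>v n}"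
    and S: "proper_weak_regular_splitting A U V" and i: "i < n"
  shows "0 \<le> (mp_inverse U * V) $$ (i,i)" and "(mp_inverse U * V) $$ (i,i) < 1"
proof -
  show "0 \<le> (mp_inverse U * V) $$ (i,i)"
    using S A(1) i unfolding proper_weak_regular_splitting_def less_eq_mat_def by auto
  show "(mp_inverse U * V) $$ (i,i) < 1"
    using proper_weak_regular_splitting_index[OF A S i] by simp
qed

lemma proper_weak_regular_splitting_index_mono:
  fixes A U1 V1 U2 V2 :: "real mat"
  assumes A: "A \<in> carrier_mat m n" "0\<^sub>m m n \<le> A" "null_mat A = {0\<^sub>v n}"
    and A_mp_nonneg: "0\<^sub>m n m \<le> mp_inverse A"
    and S1: "proper_weak_regular_splitting A U1 V1" and S2: "proper_weak_regular_splitting A U2 V2"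
    and V12: "V1 \<le> V2" and i: "i < n"
  shows "(mp_inverse U1 * V1) $$ (i,i) \<le> (mp_inverse U2 * V2) $$ (i,i)"
proof -
  have "V1 \<in> carrier_mat m n" "V2 \<in> carrier_mat m n"
    using S1 S2 A(1) unfolding proper_weak_regular_splitting_def proper_splitting_def by auto
  then have "mp_inverse A * V1 \<le> mp_inverse A * V2"
    using mult_mat_left_mono mp_inverse_left_inverse(1)[OF A(1,3)] A_mp_nonneg V12 by blast
  from less_eq_matD[OF this, of i i]
  have "(mp_inverse A * V1) $$ (i,i) \<le> (mp_inverse A * V2) $$ (i,i)"
    using i \<open>V2 \<in> carrier_mat m n\<close> mp_inverse_left_inverse(1)[OF A(1,3)] by simp
  then show ?thesis
    using proper_weak_regular_splitting_index[OF A S1 i] proper_weak_regular_splitting_index[OF A S2 i]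
    by (simp add: frac_le)
qed

subsection \<open>The iteration matrix of a multisplitting\<close>

lemma iter_mat_diagonal:
  fixes A :: "real mat"
  assumes A: "A \<in> carrier_mat m n" "0\<^sub>m m n \<le> A" "null_mat A = {0\<^sub>v n}"
    and MS: "proper_weak_regular_multisplitting A p U V E"
  shows "iter_mat A p U V E \<in> carrier_mat n n" and "diagonal_mat (iter_mat A p U V E)"
    and "\<And>i. i < n \<Longrightarrow>
      iter_mat A p U V E $$ (i,i) = (\<Sum>k<p. E k $$ (i,i) * (mp_inverse (U k) * V k) $$ (i,i))"
proof -
  have S: "proper_weak_regular_splitting A (U k) (V k)" and E: "E k \<in> carrier_mat n n" "diagonal_mat (E k)"
    if "k < p" for k
    using MS A(1) that unfolding proper_weak_regular_multisplitting_def by auto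
  have G: "mp_inverse (U k) * V k \<in> carrier_mat n n" "diagonal_mat (mp_inverse (U k) * V k)"
    if "k < p" for k
    using proper_weak_regular_splitting_complement(2)[OF A S] proper_weak_regular_splitting_diagonal[OF A S]
      that by auto
  have "E k * mp_inverse (U k) * V k = E k * (mp_inverse (U k) * V k)" if k: "k < p" for k
    using S[OF k] A(1) proper_weak_regular_splitting_complement(1)[OF A S[OF k]] E(1)[OF k]
    unfolding proper_weak_regular_splitting_def proper_splitting_def
    by (auto intro: assoc_mult_mat)
  then have "iter_mat A p U V E = mat_sum n n (\<lambda>k. E k * (mp_inverse (U k) * V k)) p"
    unfolding iter_mat_def carrier_matD(2)[OF A(1)] by (rule mat_sum_cong)
  then show "iter_mat A p U V E \<in> carrier_mat n n" "diagonal_mat (iter_mat A p U V E)"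
    "\<And>i. i < n \<Longrightarrow>
      iter_mat A p U V E $$ (i,i) = (\<Sum>k<p. E k $$ (i,i) * (mp_inverse (U k) * V k) $$ (i,i))"
    using mat_sum_diagonal_mult[of p E n "\<lambda>k. mp_inverse (U k) * V k", OF E G] by auto
qed

lemma convex_combination_less:
  fixes e g :: "nat \<Rightarrow> real"
  assumes "\<And>k. k < p \<Longrightarrow> 0 \<le> e k" "\<And>k. k < p \<Longrightarrow> g k < c" "(\<Sum>k<p. e k) = 1"
  shows "(\<Sum>k<p. e k * g k) < c"
proof -
  have "\<exists>k<p. 0 < e k"
  proof (rule ccontr)
    assume "\<not> (\<exists>k<p. 0 < e k)"
    then have "(\<Sum>k<p. e k) \<le> 0" by (intro sum_nonpos) (meson lessThan_iff not_less)
    then show False using assms(3) by simp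
  qed
  then obtain k0 where k0: "k0 < p" "0 < e k0" by blast
  have "(\<Sum>k<p. e k * g k) < (\<Sum>k<p. e k * c)"
  proof (rule sum_strict_mono_ex1)
    show "\<forall>k\<in>{..<p}. e k * g k \<le> e k * c"
      using assms(1,2) by (simp add: mult_left_mono less_imp_le)
    show "\<exists>k\<in>{..<p}. e k * g k < e k * c"
      using k0 assms(2)[OF k0(1)] by (auto intro!: bexI[of _ k0] mult_strict_left_mono)
  qed simp
  then show ?thesis using assms(3) by (simp add: sum_distrib_right[symmetric])
qed

lemma iter_mat_index_compare:
  fixes A :: "real mat"
  assumes A: "A \<in> carrier_mat m n" "0\<^sub>m m n \<le> A" "null_mat A = {0\<^sub>v n}"
    and A_mp_nonneg: "0\<^sub>m n m \<le> mp_inverse A"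
    and MS1: "proper_weak_regular_multisplitting A p U1 V1 E"
    and MS2: "proper_weak_regular_multisplitting A p U2 V2 E"
    and V12: "\<And>k. k < p \<Longrightarrow> V1 k \<le> V2 k" and i: "i < n"
  shows "0 \<le> iter_mat A p U1 V1 E $$ (i,i)"
    and "iter_mat A p U1 V1 E $$ (i,i) \<le> iter_mat A p U2 V2 E $$ (i,i)"
    and "iter_mat A p U2 V2 E $$ (i,i) < 1"
proof -
  have S1: "proper_weak_regular_splitting A (U1 k) (V1 k)"
    and S2: "proper_weak_regular_splitting A (U2 k) (V2 k)"
    and E: "E k \<in> carrier_mat n n" "0\<^sub>m n n \<le> E k" if "k < p" for k
    using MS1 MS2 A(1) that unfolding proper_weak_regular_multisplitting_def by auto
  have e_nonneg: "0 \<le> E k $$ (i,i)" if "k < p" for k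
    using less_eq_matD[OF E(2)[OF that], of i i] E(1)[OF that] i by simp
  have "mat_sum n n E p = 1\<^sub>m n"
    using MS1 A(1) unfolding proper_weak_regular_multisplitting_def by auto
  then have e_sum: "(\<Sum>k<p. E k $$ (i,i)) = 1"
    using index_mat_sum[of p E n n i i, OF E(1) i i] i by simp
  let ?g1 = "\<lambda>k. (mp_inverse (U1 k) * V1 k) $$ (i,i)"
  let ?g2 = "\<lambda>k. (mp_inverse (U2 k) * V2 k) $$ (i,i)"
  have g: "0 \<le> ?g1 k" "?g1 k \<le> ?g2 k" "?g2 k < 1" if "k < p" for k
    using proper_weak_regular_splitting_index_bounds[OF A S1[OF that] i]
      proper_weak_regular_splitting_index_bounds[OF A S2[OF that] i]
      proper_weak_regular_splitting_index_mono[OF A A_mp_nonneg S1[OF that] S2[OF that] V12[OF that] i]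
    by simp_all
  note H1 = iter_mat_diagonal(3)[OF A MS1 i] and H2 = iter_mat_diagonal(3)[OF A MS2 i]
  show "0 \<le> iter_mat A p U1 V1 E $$ (i,i)"
    unfolding H1 using e_nonneg g(1) by (auto intro!: sum_nonneg)
  show "iter_mat A p U1 V1 E $$ (i,i) \<le> iter_mat A p U2 V2 E $$ (i,i)"
    unfolding H1 H2 using e_nonneg g(2) by (auto intro!: sum_mono mult_left_mono)
  show "iter_mat A p U2 V2 E $$ (i,i) < 1"
    unfolding H2 using e_nonneg g(3) e_sum by (rule convex_combination_less)
qed

theorem theorem5p11:
  fixes A :: "real mat" and m n p :: nat
    and U1 V1 U2 V2 E :: "nat \<Rightarrow> real mat"
  assumes "A \<in> carrier_mat m n" and "0 < m" and "0 < n" and "0 < p"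
    and "0\<^sub>m m n \<le> A" and "0\<^sub>m n m \<le> mp_inverse A"
    and "proper_weak_regular_multisplitting A p U1 V1 E"
    and "proper_weak_regular_multisplitting A p U2 V2 E"
    and "\<forall>k<p. range_mat (E k) \<subseteq> range_mat (transpose_mat A)"
    and "\<forall>k<p. V1 k \<le> V2 k"
  shows "spec_rad (iter_mat A p U1 V1 E) \<le> spec_rad (iter_mat A p U2 V2 E)
         \<and> spec_rad (iter_mat A p U2 V2 E) < 1"
proof -
  note A = assms(1) and MS = assms(7,8)
  have E_carrier: "E k \<in> carrier_mat n n" if "k < p" for k
    using MS(1) A that unfolding proper_weak_regular_multisplitting_def by auto
  have E_sum: "mat_sum n n E p = 1\<^sub>m n"
    using MS(1) A unfolding proper_weak_regular_multisplitting_def by auto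
  have "null_mat A = {0\<^sub>v n}"
    using null_mat_eq_zero_if_weights_in_row_space[OF A E_carrier E_sum] assms(9) by blast
  note A' = A assms(5) this
  have V12: "\<And>k. k < p \<Longrightarrow> V1 k \<le> V2 k" using assms(10) by blast
  note H1 = iter_mat_diagonal(1,2)[OF A' MS(1)] and H2 = iter_mat_diagonal(1,2)[OF A' MS(2)]
  have "\<bar>iter_mat A p U1 V1 E $$ (i,i)\<bar> \<le> \<bar>iter_mat A p U2 V2 E $$ (i,i)\<bar>"
    and "\<bar>iter_mat A p U2 V2 E $$ (i,i)\<bar> < 1" if "i < n" for i
    using iter_mat_index_compare[OF A' assms(6) MS V12 that] by auto
  then show ?thesis
    using spec_rad_diagonal_mat_mono[OF H1 H2 assms(3)] spec_rad_diagonal_mat_less[OF H2 assms(3)] by blast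
qed

end
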